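(* There exists a dense subset $P \subseteq \mathbb{R}$ such that neither the difference set $P-P=\{x-y : x,y\in P\}$ nor the difference set $P^c-P^c=\{x-y : x,y\in \mathbb{R}\setminus P\}$ contains any interval of $\mathbb{R}$ of positive length.
   Context: $P^c=\mathbb{R}\setminus P$ denotes the complement of $P$ in $\mathbb{R}$. *)

theory Defs
  imports "HOL-Analysis.Analysis"
begin

end

theory Submission
  imports Defs
begin

text \<open>
  View \<open>\<real>\<close> as a vector space over \<open>\<rat>\<close> and pick a positive irrational \<open>t\<close>. Since \<open>1\<close> and \<open>t\<close> are
  \<open>\<rat>\<close>-independent, there is a \<open>\<rat>\<close>-linear \<open>f\<close> with \<open>f 1 = 1\<close> and \<open>f t = 0\<close>. Put
  \<open>P = {x. \<lfloor>f x\<rfloor> even}\<close>. Then \<open>f\<close> vanishes on the dense set \<open>\<rat>t \<subseteq> P\<close>, and equals \<open>1\<close> on the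
  dense set \<open>1 + \<rat>t\<close>; but \<open>f (x - y) = 1\<close> forces \<open>\<lfloor>f x\<rfloor>\<close> and \<open>\<lfloor>f y\<rfloor>\<close> to have different parity,
  so no such point lies in \<open>P - P\<close> or in \<open>P\<^sup>c - P\<^sup>c\<close>.
\<close>

definition rat_scale :: "rat \<Rightarrow> real \<Rightarrow> real"
  where "rat_scale q x = real_of_rat q * x"

lemma vector_space_rat_scale: "vector_space rat_scale"
  by unfold_locales (auto simp: rat_scale_def algebra_simps of_rat_add of_rat_mult)

lemma exists_pos_irrational: "\<exists>t::real. t > 0 \<and> t \<notin> \<rat>"
proof -
  have "\<not> (UNIV::real set) \<subseteq> \<rat>"
    using uncountable_UNIV_real countable_rat countable_subset by blast
  then obtain t :: real where t: "t \<notin> \<rat>" by blast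
  then have "\<bar>t\<bar> \<notin> \<rat>"
    by (cases "t \<ge> 0") (auto simp: Rats_minus_iff)
  moreover have "t \<noteq> 0"
    using t by auto
  ultimately show ?thesis
    by (intro exI[of _ "\<bar>t\<bar>"]) simp
qed

lemma exists_rat_linear_kills_irrational:
  assumes "t \<notin> \<rat>"
  obtains f :: "real \<Rightarrow> real"
  where "Vector_Spaces.linear rat_scale rat_scale f" "f 1 = 1" "f t = 0"
proof -
  interpret V: vector_space rat_scale by (rule vector_space_rat_scale)
  interpret P: vector_space_pair rat_scale rat_scale by unfold_locales
  have "V.span {1} = \<rat>"
    unfolding V.span_singleton rat_scale_def Rats_def by auto
  then have "t \<notin> V.span {1}" using assms by simp
  moreover have "V.independent {1::real}"
    by (rule V.independent_insertI) (auto simp: V.span_empty V.independent_empty)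
  ultimately have indep: "V.independent {t, 1}" by (rule V.independent_insertI)
  define g where "g = (\<lambda>x::real. if x = 1 then 1 else (0::real))"
  define f where "f = P.construct {t, 1} g"
  have "t \<noteq> 1" using assms by auto
  have "Vector_Spaces.linear rat_scale rat_scale f"
    unfolding f_def by (rule P.linear_construct[OF indep])
  moreover have "f 1 = 1"
    using P.construct_basis[OF indep, of 1 g] by (simp add: f_def g_def)
  moreover have "f t = 0"
    using P.construct_basis[OF indep, of t g] \<open>t \<noteq> 1\<close> by (simp add: f_def g_def)
  ultimately show thesis by (rule that)
qed

lemma rat_multiples_dense:
  fixes t :: real
  assumes "t > 0" and "a < b"
  obtains q :: rat where "a < real_of_rat q * t" "real_of_rat q * t < b"
proof -
  have "a / t < b / t"
    using assms by (simp add: divide_strict_right_mono)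
  then obtain r where r: "r \<in> \<rat>" "a / t < r" "r < b / t"
    using Rats_dense_in_real by blast
  then obtain q where q: "r = real_of_rat q"
    using Rats_cases by blast
  have "a < r * t" "r * t < b"
    using r(2,3) \<open>t > 0\<close> by (simp_all add: pos_divide_less_eq pos_less_divide_eq)
  then show thesis
    using that[of q] q by simp
qed

lemma closure_eq_UNIV_if_meets_intervals:
  fixes P :: "real set"
  assumes "\<And>a b. a < b \<Longrightarrow> \<exists>x\<in>P. a < x \<and> x < b"
  shows "closure P = UNIV"
proof (rule set_eqI, simp add: closure_approachable dist_real_def, intro allI impI)
  fix x e :: real
  assume "0 < e"
  then obtain y where "y \<in> P" "x - e < y" "y < x + e"
    using assms[of "x - e" "x + e"] by auto
  then show "\<exists>y\<in>P. \<bar>y - x\<bar> < e"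
    by (intro bexI[of _ y]) (simp_all add: abs_less_iff)
qed

lemma parity_of_floor_differs_if_diff_eq_1:
  fixes u v :: real
  assumes "u - v = 1"
  shows "even \<lfloor>u\<rfloor> \<noteq> even \<lfloor>v\<rfloor>"
proof -
  have "u = v + 1"
    using assms by simp
  then show ?thesis by simp
qed

lemma diff_set_of_parity_class_avoids_level_one:
  fixes f :: "real \<Rightarrow> real"
  assumes "Vector_Spaces.linear rat_scale rat_scale f"
    and "\<And>x y. x \<in> S \<Longrightarrow> y \<in> S \<Longrightarrow> even \<lfloor>f x\<rfloor> = even \<lfloor>f y\<rfloor>"
    and "f z = 1"
  shows "z \<notin> {x - y | x y. x \<in> S \<and> y \<in> S}"
proof
  interpret L: Vector_Spaces.linear rat_scale rat_scale f by (rule assms(1))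
  assume "z \<in> {x - y | x y. x \<in> S \<and> y \<in> S}"
  then obtain x y where "z = x - y" "x \<in> S" "y \<in> S" by blast
  then have "f x - f y = 1"
    using L.diff[of x y] assms(3) by simp
  then show False
    using parity_of_floor_differs_if_diff_eq_1 assms(2)[OF \<open>x \<in> S\<close> \<open>y \<in> S\<close>] by blast
qed

theorem mainTheorem1:
  shows "\<exists>P :: real set. closure P = UNIV \<and>
     (\<forall>a b. a < b \<longrightarrow> \<not> {a..b} \<subseteq> {x - y | x y. x \<in> P \<and> y \<in> P}) \<and>
     (\<forall>a b. a < b \<longrightarrow> \<not> {a..b} \<subseteq> {x - y | x y. x \<in> - P \<and> y \<in> - P})"
proof -
  obtain t :: real where t: "t > 0" "t \<notin> \<rat>" using exists_pos_irrational by blast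
  obtain f where lin: "Vector_Spaces.linear rat_scale rat_scale f" and "f 1 = 1" "f t = 0"
    using exists_rat_linear_kills_irrational[OF t(2)] .
  interpret L: Vector_Spaces.linear rat_scale rat_scale f by (rule lin)
  have f_multiple: "f (real_of_rat q * t) = 0" and f_shifted: "f (1 + real_of_rat q * t) = 1" for q
    using L.scale[of q t] L.add[of 1] \<open>f 1 = 1\<close> \<open>f t = 0\<close> by (simp_all add: rat_scale_def)
  define P where "P = {x. even \<lfloor>f x\<rfloor>}"
  have dense: "closure P = UNIV"
  proof (rule closure_eq_UNIV_if_meets_intervals)
    fix a b :: real
    assume "a < b"
    then obtain q where "a < real_of_rat q * t" "real_of_rat q * t < b"
      using rat_multiples_dense[OF t(1)] by blast
    then show "\<exists>x\<in>P. a < x \<and> x < b"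
      using f_multiple[of q] by (intro bexI[of _ "real_of_rat q * t"]) (simp_all add: P_def)
  qed
  have avoid: "\<not> {a..b} \<subseteq> {x - y | x y. x \<in> S \<and> y \<in> S}"
    if "a < b" and "S = P \<or> S = - P" for a b S
  proof -
    have "a - 1 < b - 1" using \<open>a < b\<close> by simp
    then obtain q where "a - 1 < real_of_rat q * t" "real_of_rat q * t < b - 1"
      using rat_multiples_dense[OF t(1)] by blast
    then have "1 + real_of_rat q * t \<in> {a..b}" by auto
    moreover have "\<And>x y. x \<in> S \<Longrightarrow> y \<in> S \<Longrightarrow> even \<lfloor>f x\<rfloor> = even \<lfloor>f y\<rfloor>"
      using \<open>S = P \<or> S = - P\<close> by (auto simp: P_def)
    ultimately show ?thesis
      using diff_set_of_parity_class_avoids_level_one[OF lin _ f_shifted] by blast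
  qed
  show ?thesis
    by (intro exI[of _ P] conjI allI impI dense avoid) simp_all
qed

end
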